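(* $$\lim_{t \to \infty} \sum_{n=0}^{\infty} N_{0,n}(t) = 2,$$ where $t\to\infty$ through the real numbers.
   Context: $N_{0,n}$ denotes the uniform B-spline of degree $n$ with knots $0,1,\ldots,n+1$ and support $[0,n+1]$: $N_{0,0}(t)=\chi_{[0,1]}(t)$ (the indicator of $[0,1]$) and $N_{0,n}(t)=\int_{-\infty}^{\infty} N_{0,n-1}(x)\chi_{[0,1]}(t-x)\,dx = \int_{t-1}^{t}N_{0,n-1}(x)\,dx$ for $n\ge1$; i.e. $N_{0,n}$ is the $(n+1)$-fold convolution of $\chi_{[0,1]}$ with itself (the Irwin–Hall density of a sum of $n+1$ independent Uniform$(0,1)$ variables). *)

theory Defs
  imports "HOL-Analysis.Analysis"
begin

text \<open>Uniform B-spline N_{0,n} of degree n with knots 0,1,...,n+1: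
  N_{0,0} = indicator of [0,1], and
  N_{0,n}(t) = integral over [t-1,t] of N_{0,n-1}
  (the convolution of N_{0,n-1} with the indicator of [0,1]).\<close>
fun bspline :: "nat \<Rightarrow> real \<Rightarrow> real" where
  "bspline 0 t = indicator {0..1} t"
| "bspline (Suc n) t = integral {t - 1..t} (bspline n)"

end

theory Submission
  imports Defs "HOL-Real_Asymp.Real_Asymp"
begin

(* Since N_{0,n} \<le> e^{2t}/2^n, the series S = \<Sum>n N_{0,n} converges and can be integrated
   termwise, so summing the recursion N_{0,n+1}(t) = \<integral>_{t-1}^t N_{0,n} gives the renewal equation
     S(t) = \<chi>_[0,1](t) + \<integral>_{t-1}^t S,   S = 0 on the negatives.
   Integrating it, P(x) = \<integral>_0^x S satisfies P(t) = 1 + \<integral>_{t-1}^t P for t \<ge> 1, and the two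
   equations together give, for t > 1,
     S(t) - 2 = \<integral>_{t-1}^t \<integral>_{t-1}^x (S(y) - 2) dy dx.
   So |S(t) - 2| is at most half the supremum of |S - 2| over [t-1, t], and the supremum of
   |S - 2| over [k, k+1] decays like 2^{-k}.  (The limit 2 is the reciprocal of the mean 1/2
   of the uniform distribution, as predicted by the renewal theorem.) *)

lemma continuous_on_integral_unit_window:
  fixes f :: "real \<Rightarrow> 'a::banach"
  assumes "\<And>a b. f integrable_on {a..b}"
  shows "continuous_on {a..b} (\<lambda>t. integral {t-1..t} f)"
proof -
  define I where "I x = integral {a-1..x} f" for x
  have cont_I: "continuous_on {a-1..b} I"
    unfolding I_def by (rule indefinite_integral_continuous_1[OF assms])
  have window: "integral {t-1..t} f = I t - I (t-1)" if "t \<in> {a..b}" for t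
  proof -
    have "integral {a-1..t-1} f + integral {t-1..t} f = integral {a-1..t} f"
      by (rule Henstock_Kurzweil_Integration.integral_combine) (use that assms in auto)
    then show ?thesis unfolding I_def by (simp add: algebra_simps)
  qed
  have "continuous_on {a..b} (\<lambda>t. I t - I (t-1))"
    by (intro continuous_on_diff continuous_on_subset[OF cont_I]
        continuous_on_compose2[OF cont_I, where f="\<lambda>t. t - 1"] continuous_intros) auto
  then show ?thesis
    by (rule continuous_on_eq) (simp add: window)
qed

lemma integral_exp_mult:
  fixes a b c :: real
  assumes "a \<le> b" and "c \<noteq> 0"
  shows "integral {a..b} (\<lambda>x. exp (c * x)) = (exp (c * b) - exp (c * a)) / c"
proof -
  have "((\<lambda>x. exp (c * x)) has_integral (exp (c * b) / c - exp (c * a) / c)) {a..b}"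
  proof (rule fundamental_theorem_of_calculus[OF \<open>a \<le> b\<close>])
    show "((\<lambda>x. exp (c * x) / c) has_vector_derivative exp (c * x)) (at x within {a..b})" for x
      unfolding has_real_derivative_iff_has_vector_derivative[symmetric]
      using \<open>c \<noteq> 0\<close> by (auto intro!: derivative_eq_intros)
  qed
  then show ?thesis by (simp add: integral_unique diff_divide_distrib)
qed

lemma has_integral_minus_left_endpoint:
  fixes a b :: real
  assumes "a \<le> b"
  shows "((\<lambda>x. x - a) has_integral (b - a)^2 / 2) {a..b}"
proof -
  have "((\<lambda>x. x - a) has_integral ((b - a)^2 / 2 - (a - a)^2 / 2)) {a..b}"
  proof (rule fundamental_theorem_of_calculus[OF assms])
    show "((\<lambda>x. (x - a)^2 / 2) has_vector_derivative x - a) (at x within {a..b})" for x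
      unfolding has_real_derivative_iff_has_vector_derivative[symmetric]
      by (auto intro!: derivative_eq_intros)
  qed
  then show ?thesis by simp
qed

lemma integrable_and_sums_integral_nonneg_series:
  fixes f :: "nat \<Rightarrow> 'a::euclidean_space \<Rightarrow> real"
  assumes integrable: "\<And>n. f n integrable_on S"
    and nonneg: "\<And>n x. x \<in> S \<Longrightarrow> 0 \<le> f n x"
    and summable: "\<And>x. x \<in> S \<Longrightarrow> summable (\<lambda>n. f n x)"
    and dominated: "h integrable_on S" "\<And>x. x \<in> S \<Longrightarrow> (\<Sum>n. f n x) \<le> h x"
  shows "(\<lambda>x. \<Sum>n. f n x) integrable_on S"
    and "(\<lambda>n. integral S (f n)) sums integral S (\<lambda>x. \<Sum>n. f n x)"
proof -
  have partial_le: "norm (\<Sum>n<k. f n x) \<le> h x" if "x \<in> S" for k x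
  proof -
    have "norm (\<Sum>n<k. f n x) = (\<Sum>n<k. f n x)"
      using nonneg[OF that] by (simp add: sum_nonneg)
    also have "\<dots> \<le> (\<Sum>n. f n x)"
      using nonneg[OF that] by (intro sum_le_suminf summable[OF that]) auto
    finally show ?thesis using dominated(2)[OF that] by linarith
  qed
  have limit: "(\<lambda>k. \<Sum>n<k. f n x) \<longlonglongrightarrow> (\<Sum>n. f n x)" if "x \<in> S" for x
    by (rule summable_LIMSEQ[OF summable[OF that]])
  have partial_integrable: "(\<lambda>x. \<Sum>n<k. f n x) integrable_on S" for k
    by (intro integrable_sum integrable) simp
  note conv = dominated_convergence[OF partial_integrable dominated(1) partial_le limit]
  show "(\<lambda>x. \<Sum>n. f n x) integrable_on S" by (rule conv(1))
  have "integral S (\<lambda>x. \<Sum>n<k. f n x) = (\<Sum>n<k. integral S (f n))" for k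
    by (intro integral_sum integrable) simp
  with conv(2) show "(\<lambda>n. integral S (f n)) sums integral S (\<lambda>x. \<Sum>n. f n x)"
    unfolding sums_def by simp
qed

lemma bspline_integrable: "bspline n integrable_on {a..b}"
proof (induction n arbitrary: a b)
  case 0
  show ?case by (simp add: integrable_on_indicator)
next
  case (Suc n)
  then show ?case
    by (auto intro: integrable_continuous_interval continuous_on_integral_unit_window)
qed

lemma bspline_nonneg: "0 \<le> bspline n t"
  by (induction n arbitrary: t) (simp_all add: integral_nonneg bspline_integrable)

lemma bspline_eq_0_neg: "t < 0 \<Longrightarrow> bspline n t = 0"
proof (induction n arbitrary: t)
  case (Suc n)
  then have "integral {t-1..t} (bspline n) = integral {t-1..t} (\<lambda>_. 0::real)"
    by (intro integral_cong) auto
  then show ?case by simp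
qed simp

lemma bspline_le_exp: "bspline n t \<le> exp (2 * t) / 2^n"
proof (induction n arbitrary: t)
  case (Suc n)
  have "bspline (Suc n) t \<le> integral {t-1..t} (\<lambda>x. exp (2 * x) / 2^n)"
    unfolding bspline.simps using Suc
    by (intro integral_le bspline_integrable integrable_continuous_interval continuous_intros) auto
  also have "\<dots> = (exp (2 * t) - exp (2 * (t - 1))) / 2^Suc n"
    by (simp add: integral_exp_mult)
  also have "\<dots> \<le> exp (2 * t) / 2^Suc n"
    by (simp add: divide_right_mono)
  finally show ?case .
qed (simp add: indicator_def)

definition bspline_sum :: "real \<Rightarrow> real" where
  "bspline_sum t = (\<Sum>n. bspline n t)"

lemma summable_bspline: "summable (\<lambda>n. bspline n t)"
proof (rule summable_comparison_test')
  show "summable (\<lambda>n. exp (2 * t) * (1/2::real)^n)"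
    by (intro summable_mult summable_geometric) simp
  show "norm (bspline n t) \<le> exp (2 * t) * (1/2)^n" for n
    using bspline_le_exp[of n t] bspline_nonneg[of n t] by (simp add: power_one_over)
qed

lemma bspline_sum_le_exp: "bspline_sum t \<le> 2 * exp (2 * t)"
proof -
  have "bspline_sum t \<le> (\<Sum>n. exp (2 * t) * (1/2::real)^n)"
    unfolding bspline_sum_def
    using bspline_le_exp[of _ t]
    by (intro suminf_le summable_bspline summable_mult summable_geometric) (simp_all add: power_one_over)
  also have "\<dots> = 2 * exp (2 * t)"
    by (simp add: suminf_mult suminf_geometric)
  finally show ?thesis .
qed

lemma bspline_sum_eq_0_neg: "t < 0 \<Longrightarrow> bspline_sum t = 0"
  by (simp add: bspline_sum_def bspline_eq_0_neg)

lemma bspline_sum_integrable: "bspline_sum integrable_on {a..b}"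
  and sums_integral_bspline: "(\<lambda>n. integral {a..b} (bspline n)) sums integral {a..b} bspline_sum"
proof -
  have "bspline_sum x \<le> 2 * exp (2 * b)" if "x \<in> {a..b}" for x
    using bspline_sum_le_exp[of x] that by (force intro: order_trans)
  note series = integrable_and_sums_integral_nonneg_series[where h="\<lambda>_. 2 * exp (2 * b)",
      OF bspline_integrable bspline_nonneg summable_bspline integrable_const_ivl
      this[unfolded bspline_sum_def]]
  show "bspline_sum integrable_on {a..b}"
    using series(1) unfolding bspline_sum_def[abs_def] .
  show "(\<lambda>n. integral {a..b} (bspline n)) sums integral {a..b} bspline_sum"
    using series(2) unfolding bspline_sum_def[abs_def] .
qed

lemma bspline_sum_renewal: "bspline_sum t = indicator {0..1} t + integral {t-1..t} bspline_sum"
proof -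
  have "bspline_sum t = bspline 0 t + (\<Sum>n. bspline (Suc n) t)"
    unfolding bspline_sum_def using suminf_split_head[OF summable_bspline[of t]] by simp
  also have "(\<Sum>n. bspline (Suc n) t) = integral {t-1..t} bspline_sum"
    using sums_integral_bspline[of "t-1" t] by (simp add: sums_iff)
  finally show ?thesis by simp
qed

locale renewal_solution =
  fixes f :: "real \<Rightarrow> real"
  assumes integrable: "f integrable_on {a..b}"
    and vanishes_neg: "t < 0 \<Longrightarrow> f t = 0"
    and renewal: "f t = indicator {0..1} t + integral {t-1..t} f"
begin

(* Base point -1 rather than 0, so that prim (x - 1) is an indefinite integral for all x \<ge> 0. *)
definition prim :: "real \<Rightarrow> real" where
  "prim x = integral {-1..x} f"

lemma prim_eq_0: "x \<le> 0 \<Longrightarrow> prim x = 0"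
proof -
  assume "x \<le> 0"
  then have "integral {-1..x} f = integral {-1..x} (\<lambda>_. 0::real)"
    by (intro integral_spike[of "{0}"]) (auto simp: vanishes_neg)
  then show ?thesis unfolding prim_def by simp
qed

lemma prim_diff: "-1 \<le> y \<Longrightarrow> y \<le> x \<Longrightarrow> prim x - prim y = integral {y..x} f"
  unfolding prim_def
  using Henstock_Kurzweil_Integration.integral_combine[of "-1" y x f] integrable by simp

lemma continuous_on_prim: "-1 \<le> a \<Longrightarrow> continuous_on {a..b} prim"
  unfolding prim_def
  by (rule continuous_on_subset[OF indefinite_integral_continuous_1[OF integrable]]) auto

lemma prim_integrable: "-1 \<le> a \<Longrightarrow> prim integrable_on {a..b}"
  by (intro integrable_continuous_interval continuous_on_prim)

lemma prim_renewal: "1 \<le> t \<Longrightarrow> prim t = 1 + integral {t-1..t} prim"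
proof -
  assume "1 \<le> t"
  have shift_integrable: "(\<lambda>x. prim (x - 1)) integrable_on {0..t}"
    by (intro integrable_continuous_interval
        continuous_on_compose2[OF continuous_on_prim[of "-1" "t-1"]] continuous_intros) auto
  have "prim t = integral {0..t} f"
    using prim_diff[of 0 t] prim_eq_0[of 0] \<open>1 \<le> t\<close> by simp
  also have "\<dots> = integral {0..t} (\<lambda>x. indicator {0..1} x + (prim x - prim (x - 1)))"
    by (intro integral_cong) (subst renewal, simp add: prim_diff)
  also have "\<dots> = 1 + integral {0..t} prim - integral {0..t} (\<lambda>x. prim (x - 1))"
    using \<open>1 \<le> t\<close> shift_integrable prim_integrable[of 0 t]
    by (simp add: integral_add integral_diff integrable_on_indicator integral_indicator
        Int_absorb2 integrable_diff)
  also have "integral {0..t} (\<lambda>x. prim (x - 1)) = integral {-1..t-1} prim"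
    using integral_shift_Icc_real[of 0 t prim "-1"] by (simp add: comp_def)
  also have "\<dots> = integral {0..t-1} prim"
  proof -
    have "integral {-1..0} prim = 0"
      using integral_cong[of "{-1..0}" prim "\<lambda>_. 0"] prim_eq_0 by simp
    then show ?thesis
      using Henstock_Kurzweil_Integration.integral_combine[of "-1" 0 "t-1" prim]
        prim_integrable[of "-1" "t-1"] \<open>1 \<le> t\<close> by simp
  qed
  also have "integral {0..t} prim = integral {0..t-1} prim + integral {t-1..t} prim"
    using Henstock_Kurzweil_Integration.integral_combine[of 0 "t-1" t prim]
      prim_integrable[of 0 t] \<open>1 \<le> t\<close> by simp
  finally show ?thesis by simp
qed

lemma deviation_eq_double_integral:
  assumes "1 < t"
  shows "f t - 2 = integral {t-1..t} (\<lambda>x. integral {t-1..x} (\<lambda>y. f y - 2))"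
proof -
  define a where "a = t - 1"
  have "0 < a" and t_eq: "t = a + 1" using assms by (simp_all add: a_def)
  have inner: "integral {a..x} (\<lambda>y. f y - 2) = prim x - prim a - 2 * (x - a)" if "x \<in> {a..t}" for x
    using that \<open>0 < a\<close> by (simp add: integral_diff[OF integrable integrable_const_ivl] prim_diff)
  have "integral {a..t} (\<lambda>x. integral {a..x} (\<lambda>y. f y - 2))
      = integral {a..t} (\<lambda>x. prim x - prim a - 2 * (x - a))"
    by (rule integral_cong) (rule inner)
  also have "\<dots> = integral {a..t} prim - integral {a..t} (\<lambda>x. prim a + 2 * (x - a))"
    using prim_integrable[of a t] \<open>0 < a\<close>
    by (subst integral_diff[symmetric])
      (auto intro!: integrable_continuous_interval continuous_intros simp: algebra_simps)
  also have "\<dots> = integral {a..t} prim - (prim a + 1)"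
    using has_integral_add[OF has_integral_const_real[of "prim a" a t]
        has_integral_mult_right[OF has_integral_minus_left_endpoint[of a t], of 2]] t_eq
    by (simp add: integral_unique)
  also have "\<dots> = f t - 2"
    using renewal[of t] prim_renewal[of t] prim_diff[of a t] \<open>0 < a\<close> assms by (simp add: a_def)
  finally show ?thesis by (simp add: a_def)
qed

lemma deviation_contraction:
  assumes "1 < t" and bound: "\<And>x. x \<in> {t-1..t} \<Longrightarrow> \<bar>f x - 2\<bar> \<le> B"
  shows "\<bar>f t - 2\<bar> \<le> B / 2"
proof -
  define a where "a = t - 1"
  define g where "g = (\<lambda>x. integral {a..x} (\<lambda>y. f y - 2))"
  have deviation_integrable: "(\<lambda>y. f y - 2) integrable_on {a..b}" for b
    by (intro integrable_diff integrable integrable_const_ivl)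
  have g_le: "\<bar>g x\<bar> \<le> B * (x - a)" if "x \<in> {a..t}" for x
  proof -
    have "\<bar>g x\<bar> \<le> integral {a..x} (\<lambda>_. B)"
      unfolding g_def real_norm_def[symmetric] using that
      by (intro integral_norm_bound_integral deviation_integrable integrable_const_ivl)
        (auto simp: a_def bound)
    then show ?thesis using that by (simp add: mult.commute)
  qed
  have "\<bar>f t - 2\<bar> = \<bar>integral {a..t} g\<bar>"
    using deviation_eq_double_integral[OF \<open>1 < t\<close>] by (simp add: g_def a_def)
  also have "\<dots> \<le> integral {a..t} (\<lambda>x. B * (x - a))"
    unfolding real_norm_def[symmetric] g_def
    by (intro integral_norm_bound_integral integrable_continuous_interval continuous_intros
        indefinite_integral_continuous_1 deviation_integrable) (use g_le in \<open>simp add: g_def\<close>)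
  also have "\<dots> = B / 2"
    using has_integral_mult_right[OF has_integral_minus_left_endpoint[of a t], of B]
    by (intro integral_unique) (simp add: a_def)
  finally show ?thesis .
qed

definition window_deviation :: "nat \<Rightarrow> real" where
  "window_deviation k = (SUP x\<in>{real k..real k + 1}. \<bar>f x - 2\<bar>)"

lemma bdd_above_deviation: "bdd_above ((\<lambda>x. \<bar>f x - 2\<bar>) ` {a..b})"
proof -
  have "bounded ((\<lambda>t. integral {t-1..t} f) ` {a..b})"
    by (intro compact_imp_bounded compact_continuous_image continuous_on_integral_unit_window
        integrable compact_Icc)
  then obtain C where C: "\<And>x. x \<in> {a..b} \<Longrightarrow> \<bar>integral {x-1..x} f\<bar> \<le> C"
    unfolding bounded_iff real_norm_def by blast
  have "\<bar>f x - 2\<bar> \<le> C + 3" if "x \<in> {a..b}" for x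
    using renewal[of x] C[OF that] by (auto simp: indicator_def)
  then show ?thesis by (intro bdd_aboveI2)
qed

lemma deviation_le_window_deviation:
  "x \<in> {real k..real k + 1} \<Longrightarrow> \<bar>f x - 2\<bar> \<le> window_deviation k"
  unfolding window_deviation_def by (rule cSUP_upper[OF _ bdd_above_deviation])

lemma window_deviation_nonneg: "0 \<le> window_deviation k"
  using deviation_le_window_deviation[of "real k" k] by simp

lemma window_deviation_Suc_le:
  assumes "1 \<le> k"
  shows "window_deviation (Suc k) \<le> window_deviation k / 2"
proof -
  define M where "M = max (window_deviation k) (window_deviation (Suc k))"
  have "\<bar>f x - 2\<bar> \<le> M / 2" if x: "x \<in> {real (Suc k)..real (Suc k) + 1}" for x
  proof (rule deviation_contraction)
    show "1 < x" using x assms by simp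
    show "\<bar>f y - 2\<bar> \<le> M" if y: "y \<in> {x-1..x}" for y
      using deviation_le_window_deviation[of y k] deviation_le_window_deviation[of y "Suc k"] x y
      by (cases "y \<le> real k + 1") (auto simp: M_def)
  qed
  then have "window_deviation (Suc k) \<le> M / 2"
    unfolding window_deviation_def[of "Suc k"] by (intro cSUP_least) auto
  \<comment> \<open>If the maximum were the second argument, it would be at most half of itself, hence 0.\<close>
  then show ?thesis
    using window_deviation_nonneg[of k] by (auto simp: M_def max_def split: if_splits)
qed

lemma window_deviation_le_geometric:
  assumes "1 \<le> k"
  shows "window_deviation k \<le> 2 * window_deviation 1 / 2^k"
  using assms
proof (induction k rule: dec_induct)
  case (step k)
  then show ?case
    using window_deviation_Suc_le[of k] by (simp add: divide_right_mono)
qed simp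

lemma deviation_le_exponential:
  assumes "1 \<le> t"
  shows "\<bar>f t - 2\<bar> \<le> 4 * window_deviation 1 / 2 powr t"
proof -
  define k where "k = nat \<lfloor>t\<rfloor>"
  have k: "real k \<le> t" "t \<le> real k + 1" "1 \<le> k"
    using assms by (simp_all add: k_def le_nat_floor)
  have "\<bar>f t - 2\<bar> \<le> window_deviation k"
    using k by (intro deviation_le_window_deviation) simp
  also have "\<dots> \<le> 2 * window_deviation 1 / 2 powr k"
    using window_deviation_le_geometric[OF \<open>1 \<le> k\<close>] by (simp add: powr_realpow)
  also have "\<dots> \<le> 2 * window_deviation 1 / 2 powr (t - 1)"
    using k window_deviation_nonneg[of 1] by (intro divide_left_mono) auto
  also have "\<dots> = 4 * window_deviation 1 / 2 powr t"
    by (simp add: powr_diff)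
  finally show ?thesis .
qed

lemma tendsto_2: "(f \<longlongrightarrow> 2) at_top"
proof -
  have "((\<lambda>t. f t - 2) \<longlongrightarrow> 0) at_top"
  proof (rule Lim_null_comparison)
    show "\<forall>\<^sub>F t in at_top. norm (f t - 2) \<le> 4 * window_deviation 1 / 2 powr t"
      using eventually_ge_at_top[of 1] by eventually_elim (use deviation_le_exponential in auto)
    have "((\<lambda>t. C / 2 powr t) \<longlongrightarrow> 0) at_top" for C :: real
      by real_asymp
    then show "((\<lambda>t. 4 * window_deviation 1 / 2 powr t) \<longlongrightarrow> 0) at_top" .
  qed
  then show ?thesis by (simp add: LIM_zero_iff)
qed

end

interpretation bspline_sum: renewal_solution bspline_sum
  by standard (fact bspline_sum_integrable, fact bspline_sum_eq_0_neg, fact bspline_sum_renewal)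

theorem mainTheorem13:
  shows "(\<forall>t::real. summable (\<lambda>n. bspline n t)) \<and>
         ((\<lambda>t::real. \<Sum>n. bspline n t) \<longlongrightarrow> 2) at_top"
  using summable_bspline bspline_sum.tendsto_2 unfolding bspline_sum_def[abs_def] by blast

end
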